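(* Let $K\subset S^3$ be a knot and $C_0=CFK^-(K)$, viewed as a $(\mathbb{Z},U)$-filtered complex filtered by the Alexander grading $A$. Choose a horizontally simplified basis $\{x_1,\dots,x_N,y_1,\dots,y_N,z\}$ of $C_0$ over $\mathbb{F}[U]$. The $\mathbb{F}$-basis of $C_0$ then consists of the homogeneous elements $U^m w$ with $m\ge 0$ and $w$ in this basis; in particular $\partial_H(y_1)=U^{r_1}x_1$ with $r_1>0$. Define the following objects. - Let $h_1:C_0\to C_0$ be the $\mathbb{F}$-linear map with $h_1(U^{r_1+n}x_1)=U^ny_1$ for all $n\ge 0$, and $h_1=0$ on all other homogeneous basis elements. - Let $C_1$ be the $\mathbb{F}$-span of all homogeneous basis elements except $U^{r_1+n}x_1$ and $U^ny_1$ ($n\ge0$), with projection $\pi:C_0\to C_1$ and inclusion $\iota:C_1\to C_0$. - Set $\partial_1=\pi\circ(\partial+\partial h_1\partial)\circ\iota$, $U_1=\pi\circ(U+\partial h_1U)\circ\iota$, and $A_1=A\circ\iota$. Then $(C_1,\partial_1,A_1,U_1)$ is a $(\mathbb{Z},U)$-filtered chain deformation retract of $C_0$, via the maps $f_1=\pi\circ(I+\partial h_1)$ and $g_1=(I+h_1\partial)\circ\iota$.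
   Context: Coefficients are in $\mathbb{F}=\mathbb{Z}/2$. $CFK^-(K)$ is the Ozsváth–Szabó knot Floer complex. It is freely generated over $\mathbb{F}[U]$ by finitely many homogeneous generators and carries an Alexander filtration with $A(U^nx)=A(x)-n$ and $A(\sum_i y_i)=\max_i A(y_i)$ for homogeneous $y_i$. It also carries a Maslov grading, lowered by $1$ by $\partial$ and by $2$ by $U$. For a homogeneous element $w$, $\partial_H(w)$ (the horizontal differential) is the sum of the terms of $\partial w$ whose Alexander grading equals $A(w)$. A basis $\{x_i,y_i,z\}$ over $\mathbb{F}[U]$ is horizontally simplified if $\partial_H(y_i)=U^{r_i}x_i$ for some $r_i>0$ and $\partial_H(x_i)=\partial_H(z)=0$. A $\mathbb{Z}$-filtration is a function $F$ with $F(x+y)\le\max(F(x),F(y))$, $F(\partial x)\le F(x)$, and $F^{-1}(-\infty)=\{0\}$. A $(\mathbb{Z},U)$-filtered complex is a filtered complex with a specified filtered chain map $U$. $C'$ is a $(\mathbb{Z},U)$-filtered chain deformation retract of $C$ if there are filtered chain maps $f:C\to C'$ and $g:C'\to C$ satisfying: - $fg=I_{C'}$; - $gf=I+\partial h+h\partial$ for a filtered map $h$; - $fU\sim U'f$ and $gU'\sim Ug$, where $\sim$ denotes filtered chain homotopy. *)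

theory Defs
  imports Main "HOL-Library.Z2" "HOL-Library.Poly_Mapping" "HOL-Library.Option_ord"
begin

text \<open>Vector spaces over F = Z/2 are modelled by a carrier set V inside an
  abelian group type 'v (in which x + x = 0).  Over Z/2 a map is linear iff it
  is additive.  A Z-filtration takes values in int option, where None plays
  the role of minus infinity (None is the bottom element of the order).\<close>

definition subspace2 :: "'v::ab_group_add set \<Rightarrow> bool" where
  "subspace2 V \<longleftrightarrow> 0 \<in> V \<and> (\<forall>x\<in>V. \<forall>y\<in>V. x + y \<in> V)"

definition lin2 :: "'v::ab_group_add set \<Rightarrow> 'w::ab_group_add set \<Rightarrow> ('v \<Rightarrow> 'w) \<Rightarrow> bool" where
  "lin2 V W f \<longleftrightarrow> (\<forall>x\<in>V. f x \<in> W) \<and> (\<forall>x\<in>V. \<forall>y\<in>V. f (x + y) = f x + f y)"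

definition chain_complex :: "'v::ab_group_add set \<Rightarrow> ('v \<Rightarrow> 'v) \<Rightarrow> bool" where
  "chain_complex V d \<longleftrightarrow> subspace2 V \<and> lin2 V V d \<and> (\<forall>x\<in>V. d (d x) = 0)"

definition Z_filtration :: "'v::ab_group_add set \<Rightarrow> ('v \<Rightarrow> 'v) \<Rightarrow> ('v \<Rightarrow> int option) \<Rightarrow> bool" where
  "Z_filtration V d F \<longleftrightarrow>
     (\<forall>x\<in>V. \<forall>y\<in>V. F (x + y) \<le> max (F x) (F y)) \<and>
     (\<forall>x\<in>V. F (d x) \<le> F x) \<and>
     (\<forall>x\<in>V. F x = None \<longleftrightarrow> x = 0)"

definition filtered_map :: "'v set \<Rightarrow> ('v \<Rightarrow> int option) \<Rightarrow> ('w \<Rightarrow> int option) \<Rightarrow> ('v \<Rightarrow> 'w) \<Rightarrow> bool" where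
  "filtered_map V F G f \<longleftrightarrow> (\<forall>x\<in>V. G (f x) \<le> F x)"

definition filtered_chain_map ::
  "'v::ab_group_add set \<Rightarrow> ('v \<Rightarrow> 'v) \<Rightarrow> ('v \<Rightarrow> int option) \<Rightarrow>
   'w::ab_group_add set \<Rightarrow> ('w \<Rightarrow> 'w) \<Rightarrow> ('w \<Rightarrow> int option) \<Rightarrow> ('v \<Rightarrow> 'w) \<Rightarrow> bool" where
  "filtered_chain_map V d F W d' G f \<longleftrightarrow>
     lin2 V W f \<and> filtered_map V F G f \<and> (\<forall>x\<in>V. f (d x) = d' (f x))"

text \<open>Filtered chain homotopy between two maps V \<rightarrow> W (over Z/2, f - f' = f + f').\<close>
definition filtered_homotopic ::
  "'v::ab_group_add set \<Rightarrow> ('v \<Rightarrow> 'v) \<Rightarrow> ('v \<Rightarrow> int option) \<Rightarrow>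
   'w::ab_group_add set \<Rightarrow> ('w \<Rightarrow> 'w) \<Rightarrow> ('w \<Rightarrow> int option) \<Rightarrow>
   ('v \<Rightarrow> 'w) \<Rightarrow> ('v \<Rightarrow> 'w) \<Rightarrow> bool" where
  "filtered_homotopic V d F W d' G f f' \<longleftrightarrow>
     (\<exists>H. lin2 V W H \<and> filtered_map V F G H \<and>
          (\<forall>x\<in>V. f x + f' x = d' (H x) + H (d x)))"

definition ZU_filtered_complex ::
  "'v::ab_group_add set \<Rightarrow> ('v \<Rightarrow> 'v) \<Rightarrow> ('v \<Rightarrow> int option) \<Rightarrow> ('v \<Rightarrow> 'v) \<Rightarrow> bool" where
  "ZU_filtered_complex V d F U \<longleftrightarrow>
     chain_complex V d \<and> Z_filtration V d F \<and> filtered_chain_map V d F V d F U"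

definition ZU_deformation_retract ::
  "'v::ab_group_add set \<Rightarrow> ('v \<Rightarrow> 'v) \<Rightarrow> ('v \<Rightarrow> int option) \<Rightarrow> ('v \<Rightarrow> 'v) \<Rightarrow>
   'w::ab_group_add set \<Rightarrow> ('w \<Rightarrow> 'w) \<Rightarrow> ('w \<Rightarrow> int option) \<Rightarrow> ('w \<Rightarrow> 'w) \<Rightarrow>
   ('v \<Rightarrow> 'w) \<Rightarrow> ('w \<Rightarrow> 'v) \<Rightarrow> bool" where
  "ZU_deformation_retract C d F U C' d' F' U' f g \<longleftrightarrow>
     ZU_filtered_complex C d F U \<and> ZU_filtered_complex C' d' F' U' \<and>
     filtered_chain_map C d F C' d' F' f \<and> filtered_chain_map C' d' F' C d F g \<and>
     (\<forall>x\<in>C'. f (g x) = x) \<and>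
     (\<exists>h. lin2 C C h \<and> filtered_map C F F h \<and>
          (\<forall>x\<in>C. g (f x) = x + d (h x) + h (d x))) \<and>
     filtered_homotopic C d F C' d' F' (\<lambda>x. f (U x)) (\<lambda>x. U' (f x)) \<and>
     filtered_homotopic C' d' F' C d F (\<lambda>x. g (U' x)) (\<lambda>x. U (g x))"

text \<open>An element of a free F[U]-module with F[U]-basis indexed by 'g is an
  F-linear combination of the F-basis elements U^m w, encoded as (w, m).\<close>
type_synonym 'g chain = "('g \<times> nat) \<Rightarrow>\<^sub>0 bit"

definition basis_el :: "'g \<Rightarrow> nat \<Rightarrow> 'g chain" where
  "basis_el w m = Poly_Mapping.single (w, m) 1"

text \<open>F-linear extension of a map given on the F-basis (coefficients are 0 or 1).\<close>
definition lin_ext :: "('g \<times> nat \<Rightarrow> 'v::comm_monoid_add) \<Rightarrow> 'g chain \<Rightarrow> 'v" where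
  "lin_ext \<phi> c = (\<Sum>p\<in>Poly_Mapping.keys c. \<phi> p)"

definition Upow :: "nat \<Rightarrow> 'g chain \<Rightarrow> 'g chain" where
  "Upow m = lin_ext (\<lambda>(w, k). basis_el w (k + m))"

definition bdry :: "('g \<Rightarrow> 'g chain) \<Rightarrow> 'g chain \<Rightarrow> 'g chain" where
  "bdry d = lin_ext (\<lambda>(w, m). Upow m (d w))"

definition gr_el :: "('g \<Rightarrow> int) \<Rightarrow> 'g \<times> nat \<Rightarrow> int" where
  "gr_el A p = A (fst p) - int (snd p)"

definition maslov_el :: "('g \<Rightarrow> int) \<Rightarrow> 'g \<times> nat \<Rightarrow> int" where
  "maslov_el M p = M (fst p) - 2 * int (snd p)"

definition alex :: "('g \<Rightarrow> int) \<Rightarrow> 'g chain \<Rightarrow> int option" where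
  "alex A c = (if c = 0 then None else Some (Max (gr_el A ` Poly_Mapping.keys c)))"

definition horiz :: "('g \<Rightarrow> int) \<Rightarrow> ('g \<Rightarrow> 'g chain) \<Rightarrow> 'g \<Rightarrow> 'g chain" where
  "horiz A d w = (\<Sum>p\<in>Poly_Mapping.keys (d w). if gr_el A p = A w then Poly_Mapping.single p 1 else 0)"

text \<open>The data (Alexander grading A, Maslov grading M, differential d on generators)
  defines a free, finitely generated, bigraded, Alexander-filtered F[U]-complex.\<close>
definition knot_like_complex :: "('g::finite \<Rightarrow> int) \<Rightarrow> ('g \<Rightarrow> int) \<Rightarrow> ('g \<Rightarrow> 'g chain) \<Rightarrow> bool" where
  "knot_like_complex A M d \<longleftrightarrow>
     (\<forall>w. bdry d (d w) = 0) \<and>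
     (\<forall>w. \<forall>p\<in>Poly_Mapping.keys (d w). maslov_el M p = M w - 1) \<and>
     (\<forall>w. \<forall>p\<in>Poly_Mapping.keys (d w). gr_el A p \<le> A w)"

definition horiz_simplified ::
  "('g \<Rightarrow> int) \<Rightarrow> ('g \<Rightarrow> 'g chain) \<Rightarrow> nat \<Rightarrow> (nat \<Rightarrow> 'g) \<Rightarrow> (nat \<Rightarrow> 'g) \<Rightarrow> 'g \<Rightarrow> (nat \<Rightarrow> nat) \<Rightarrow> bool" where
  "horiz_simplified A d N x y z r \<longleftrightarrow>
     inj_on x {1..N} \<and> inj_on y {1..N} \<and>
     x ` {1..N} \<inter> y ` {1..N} = {} \<and> z \<notin> x ` {1..N} \<and> z \<notin> y ` {1..N} \<and>
     x ` {1..N} \<union> y ` {1..N} \<union> {z} = UNIV \<and>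
     (\<forall>i\<in>{1..N}. 0 < r i \<and> horiz A d (y i) = basis_el (x i) (r i) \<and> horiz A d (x i) = 0) \<and>
     horiz A d z = 0"


definition excl1 :: "'g \<Rightarrow> 'g \<Rightarrow> nat \<Rightarrow> ('g \<times> nat) set" where
  "excl1 x1 y1 r1 = {p. (fst p = x1 \<and> r1 \<le> snd p) \<or> fst p = y1}"

definition h1_map :: "'g \<Rightarrow> 'g \<Rightarrow> nat \<Rightarrow> 'g chain \<Rightarrow> 'g chain" where
  "h1_map x1 y1 r1 = lin_ext (\<lambda>(w, m). if w = x1 \<and> r1 \<le> m then basis_el y1 (m - r1) else 0)"

text \<open>C_1: the F-span of the remaining F-basis elements (a subspace of C_0,
  so the inclusion \<iota> is the identity on it).\<close>
definition C1_set :: "'g \<Rightarrow> 'g \<Rightarrow> nat \<Rightarrow> 'g chain set" where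
  "C1_set x1 y1 r1 = {c. Poly_Mapping.keys c \<inter> excl1 x1 y1 r1 = {}}"

definition proj1 :: "'g \<Rightarrow> 'g \<Rightarrow> nat \<Rightarrow> 'g chain \<Rightarrow> 'g chain" where
  "proj1 x1 y1 r1 = lin_ext (\<lambda>p. if p \<in> excl1 x1 y1 r1 then 0 else Poly_Mapping.single p 1)"

end

theory Submission
  imports Defs HOL.Modules
begin

text \<open>
  The retraction is Gaussian elimination over \<open>\<int>/2\<close>. Split \<open>C\<^sub>0 = C\<^sub>1 \<oplus> E\<^sub>x \<oplus> E\<^sub>y\<close>,
  where \<open>E\<^sub>x\<close> and \<open>E\<^sub>y\<close> are spanned by the elements \<open>U\<^bsup>r\<^sub>1+n\<^esup> x\<^sub>1\<close> and \<open>U\<^sup>n y\<^sub>1\<close>.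
  The Maslov grading forces \<open>\<partial> y\<^sub>1 = U\<^bsup>r\<^sub>1\<^esup> x\<^sub>1 + R\<close> with \<open>R\<close> free of \<open>x\<^sub>1\<close> and \<open>y\<^sub>1\<close>,
  so \<open>h\<^sub>1 : E\<^sub>x \<rightarrow> E\<^sub>y\<close> inverts the \<open>E\<^sub>x\<close>-component of \<open>\<partial>\<close> on \<open>E\<^sub>y\<close>. From this alone
  one gets \<open>h\<^sub>1 h\<^sub>1 = 0\<close>, \<open>h\<^sub>1 \<partial> h\<^sub>1 = h\<^sub>1\<close>, \<open>g\<^sub>1 f\<^sub>1 = I + \<partial> h\<^sub>1 + h\<^sub>1 \<partial>\<close>, \<open>f\<^sub>1 g\<^sub>1 = I\<close>, and
  that \<open>f\<^sub>1\<close>, \<open>g\<^sub>1\<close> intertwine \<open>\<partial>\<close> with \<open>\<partial>\<^sub>1 = f\<^sub>1 \<partial> g\<^sub>1\<close>. As \<open>U\<close> preserves \<open>E\<^sub>y\<close>,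
  \<open>f\<^sub>1\<close> kills \<open>U h\<^sub>1\<close>; hence \<open>f\<^sub>1 U = U\<^sub>1 f\<^sub>1\<close> exactly, while \<open>h\<^sub>1 U g\<^sub>1\<close> is a homotopy
  between \<open>g\<^sub>1 U\<^sub>1\<close> and \<open>U g\<^sub>1\<close>. Finally \<open>U\<^bsup>r\<^sub>1\<^esup> x\<^sub>1\<close> is the horizontal part of \<open>\<partial> y\<^sub>1\<close>,
  so \<open>A(y\<^sub>1) = A(x\<^sub>1) - r\<^sub>1\<close>: \<open>h\<^sub>1\<close>, and with it every map above, preserves the
  Alexander filtration.
\<close>

text \<open>
  \<open>\<rho>X\<close> and \<open>\<rho>Y\<close> are the projections onto two summands \<open>E\<^sub>x\<close> and \<open>E\<^sub>y\<close> whose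
  complement is the range of \<open>proj\<close>; \<open>h\<close> maps \<open>E\<^sub>x\<close> to \<open>E\<^sub>y\<close> and is inverse to the
  \<open>E\<^sub>x\<close>-component of \<open>D\<close> on \<open>E\<^sub>y\<close>. The maps \<open>proj\<close>, \<open>retr\<close>, \<open>incl\<close>, \<open>D1\<close>,
  \<open>U1\<close> defined below are \<open>\<pi>\<close>, \<open>f\<^sub>1\<close>, \<open>g\<^sub>1\<close>, \<open>\<partial>\<^sub>1\<close>, \<open>U\<^sub>1\<close> of the lemma.
\<close>

locale gaussian_elimination =
  D: additive D + h: additive h + X: additive \<rho>X + Y: additive \<rho>Y + U: additive U
  for D h \<rho>X \<rho>Y U :: "'v::ab_group_add \<Rightarrow> 'v" +
  assumes char_two: "v + v = (0 :: 'v)"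
    and D_D: "D (D v) = 0"
    and U_D: "U (D v) = D (U v)"
    and \<rho>X_idem: "\<rho>X (\<rho>X v) = \<rho>X v"
    and \<rho>Y_idem: "\<rho>Y (\<rho>Y v) = \<rho>Y v"
    and \<rho>X_\<rho>Y: "\<rho>X (\<rho>Y v) = 0"
    and \<rho>Y_\<rho>X: "\<rho>Y (\<rho>X v) = 0"
    and h_eq: "h v = \<rho>Y (h (\<rho>X v))"
    and h_D_\<rho>Y: "h (D (\<rho>Y v)) = \<rho>Y v"
    and \<rho>X_D_h: "\<rho>X (D (h v)) = \<rho>X v"
    and \<rho>Y_D_h: "\<rho>Y (D (h v)) = 0"
    and \<rho>Y_U_\<rho>Y: "\<rho>Y (U (\<rho>Y v)) = U (\<rho>Y v)"
begin

lemma add_self_left [simp]: "v + (v + w) = w" for v w :: 'v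
  using add.assoc [of v v w] by (simp add: char_two)

lemmas [simp] = char_two add_self_left D.zero h.zero X.zero Y.zero U.zero
  D_D \<rho>X_idem \<rho>Y_idem \<rho>X_\<rho>Y \<rho>Y_\<rho>X \<rho>X_D_h \<rho>Y_D_h h_D_\<rho>Y

definition proj :: "'v \<Rightarrow> 'v" where
  "proj v = v + \<rho>X v + \<rho>Y v"

definition retr :: "'v \<Rightarrow> 'v" where
  "retr v = proj (v + D (h v))"

definition incl :: "'v \<Rightarrow> 'v" where
  "incl v = v + h (D v)"

definition D1 :: "'v \<Rightarrow> 'v" where
  "D1 v = proj (D v + D (h (D v)))"

definition U1 :: "'v \<Rightarrow> 'v" where
  "U1 v = retr (U v)"

sublocale proj: additive proj
  by unfold_locales (simp add: proj_def X.add Y.add ac_simps)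

sublocale retr: additive retr
  by unfold_locales (simp add: retr_def proj.add D.add h.add ac_simps)

sublocale incl: additive incl
  by unfold_locales (simp add: incl_def D.add h.add ac_simps)

sublocale D1: additive D1
  by unfold_locales (simp add: D1_def proj.add D.add h.add ac_simps)

sublocale U1: additive U1
  by unfold_locales (simp add: U1_def retr.add U.add)

lemmas [simp] = proj.zero retr.zero incl.zero D1.zero U1.zero

lemma proj_\<rho>Y [simp]: "proj (\<rho>Y v) = 0"
  by (simp add: proj_def)

lemma h_\<rho>Y [simp]: "h (\<rho>Y v) = 0"
  by (subst h_eq) simp

lemma proj_h [simp]: "proj (h v) = 0"
  by (subst h_eq) simp

lemma h_proj [simp]: "h (proj v) = 0"
  by (subst h_eq) (simp add: proj_def X.add)

lemma proj_proj: "proj (proj v) = proj v"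
  by (simp add: proj_def X.add Y.add)

lemma h_h [simp]: "h (h v) = 0"
  by (subst (2) h_eq) simp

lemma h_D_h [simp]: "h (D (h v)) = h v"
  by (subst (1 2) h_eq) simp

lemma retr_eq: "retr v = v + D (h v) + \<rho>Y v"
  by (simp add: retr_def proj_def X.add Y.add ac_simps)

lemma incl_retr: "incl (retr v) = v + D (h v) + h (D v)"
  by (simp add: incl_def retr_eq D.add h.add ac_simps)

lemma retr_D_h [simp]: "retr (D (h v)) = 0"
  by (simp add: retr_def)

lemma D1_eq: "D1 v = retr (D (incl v))"
  by (simp add: D1_def retr_def incl_def D.add h.add)

lemma retr_D: "retr (D v) = D1 (retr v)"
  by (simp add: D1_eq incl_retr D.add retr.add)

lemma h_D_incl [simp]: "h (D (incl v)) = 0"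
  by (simp add: incl_def D.add h.add)

lemma incl_D1: "incl (D1 v) = D (incl v)"
  by (simp add: D1_eq incl_retr)

lemma D1_D1: "D1 (D1 v) = 0"
  by (simp add: D1_eq [of "D1 v"] incl_D1 retr.zero)

lemma retr_incl: "v \<in> range proj \<Longrightarrow> retr (incl v) = v"
  by (auto simp: retr_def incl_def proj.add D.add h.add proj_proj)

lemma retr_U_h [simp]: "retr (U (h v)) = 0"
proof -
  have "U (h v) = \<rho>Y (U (\<rho>Y (h (\<rho>X v))))"
    by (subst h_eq) (simp add: \<rho>Y_U_\<rho>Y)
  then show ?thesis
    by (simp add: retr_def)
qed

lemma U1_eq: "U1 v = retr (U (incl v))"
  by (simp add: U1_def incl_def U.add retr.add)

lemma retr_U: "retr (U v) = U1 (retr v)"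
proof -
  have "retr (U v) = retr (U (incl (retr v) + D (h v) + h (D v)))"
    by (simp add: incl_retr ac_simps)
  also have "\<dots> = U1 (retr v)"
    by (simp add: U.add retr.add U_D retr_D U1_eq)
  finally show ?thesis .
qed

lemma U1_D1: "U1 (D1 v) = D1 (U1 v)"
  by (simp only: U1_eq incl_D1 U_D retr_D)

definition K :: "'v \<Rightarrow> 'v" where
  "K v = h (U (incl v))"

sublocale K: additive K
  by unfold_locales (simp add: K_def incl.add U.add h.add)

lemma U_incl: "U (incl v) = incl (U1 v) + D (K v) + K (D1 v)"
proof -
  have "U (incl v) = incl (retr (U (incl v))) + D (h (U (incl v))) + h (D (U (incl v)))"
    by (simp add: incl_retr ac_simps)
  also have "\<dots> = incl (U1 v) + D (K v) + K (D1 v)"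
    by (simp only: K_def U1_eq incl_D1 U_D)
  finally show ?thesis .
qed

lemma incl_U1_homotopy: "incl (U1 v) + U (incl v) = D (K v) + K (D1 v)"
  by (simp add: U_incl add.assoc)

end

lemma additive_lin2: "additive f \<Longrightarrow> (\<And>v. v \<in> V \<Longrightarrow> f v \<in> W) \<Longrightarrow> lin2 V W f"
  by (simp add: lin2_def additive.add)

lemma subspace2_range: "additive f \<Longrightarrow> subspace2 (range f)"
  unfolding subspace2_def
  by (auto intro: range_eqI [of _ _ 0] range_eqI [of _ _ "_ + _"] simp: additive.zero additive.add)

locale filtered_gaussian_elimination = gaussian_elimination D h \<rho>X \<rho>Y U
  for D h \<rho>X \<rho>Y U :: "'v::ab_group_add \<Rightarrow> 'v" +
  fixes F :: "'v \<Rightarrow> int option"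
  assumes Z_filtration: "Z_filtration UNIV D F"
    and h_filtered: "F (h v) \<le> F v"
    and \<rho>X_filtered: "F (\<rho>X v) \<le> F v"
    and \<rho>Y_filtered: "F (\<rho>Y v) \<le> F v"
    and U_filtered: "F (U v) \<le> F v"
begin

lemma F_add: "F (v + w) \<le> max (F v) (F w)"
  using Z_filtration by (simp add: Z_filtration_def)

lemma F_add_le: "F v \<le> a \<Longrightarrow> F w \<le> a \<Longrightarrow> F (v + w) \<le> a"
  by (rule order_trans [OF F_add max.boundedI])

lemma D_filtered: "F (D v) \<le> F v"
  using Z_filtration by (simp add: Z_filtration_def)

lemma F_eq_None_iff: "F v = None \<longleftrightarrow> v = 0"
  using Z_filtration by (simp add: Z_filtration_def)

lemma F_zero [simp]: "F 0 = None"
  by (simp add: F_eq_None_iff)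

lemma D_h_filtered: "F (D (h v)) \<le> F v"
  by (rule order_trans [OF D_filtered h_filtered])

lemma h_D_filtered: "F (h (D v)) \<le> F v"
  by (rule order_trans [OF h_filtered D_filtered])

lemma proj_filtered: "F (proj v) \<le> F v"
  by (simp add: proj_def F_add_le \<rho>X_filtered \<rho>Y_filtered)

lemma retr_filtered: "F (retr v) \<le> F v"
  unfolding retr_def
  by (rule order_trans [OF proj_filtered F_add_le [OF order_refl D_h_filtered]])

lemma incl_filtered: "F (incl v) \<le> F v"
  by (simp add: incl_def F_add_le h_D_filtered)

lemma D1_filtered: "F (D1 v) \<le> F v"
  unfolding D1_eq
  by (rule order_trans [OF retr_filtered order_trans [OF D_filtered incl_filtered]])

lemma U1_filtered: "F (U1 v) \<le> F v"
  unfolding U1_def by (rule order_trans [OF retr_filtered U_filtered])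

lemma K_filtered: "F (K v) \<le> F v"
  unfolding K_def
  by (rule order_trans [OF h_filtered order_trans [OF U_filtered incl_filtered]])

theorem deformation_retract:
  "ZU_deformation_retract UNIV D F U (range proj) D1 F U1 retr incl"
proof -
  have zero_in_range: "0 \<in> range proj"
    by (metis proj.zero rangeI)
  have retr_in: "retr v \<in> range proj" for v
    by (simp add: retr_def)
  have D1_in: "D1 v \<in> range proj" for v
    by (simp add: D1_def)
  have U1_in: "U1 v \<in> range proj" for v
    by (simp add: U1_def retr_in)
  have "ZU_filtered_complex UNIV D F U"
    unfolding ZU_filtered_complex_def chain_complex_def filtered_chain_map_def filtered_map_def
    by (simp add: subspace2_def additive_lin2 D.additive_axioms U.additive_axioms
        Z_filtration U_filtered U_D)
  moreover have "ZU_filtered_complex (range proj) D1 F U1"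
    unfolding ZU_filtered_complex_def chain_complex_def filtered_chain_map_def filtered_map_def
      Z_filtration_def
    by (simp add: subspace2_range proj.additive_axioms additive_lin2 D1.additive_axioms
        U1.additive_axioms D1_in U1_in D1_D1 F_add D1_filtered F_eq_None_iff U1_filtered U1_D1)
  moreover have "filtered_chain_map UNIV D F (range proj) D1 F retr"
    unfolding filtered_chain_map_def filtered_map_def
    by (simp add: additive_lin2 retr.additive_axioms retr_in retr_filtered retr_D)
  moreover have "filtered_chain_map (range proj) D1 F UNIV D F incl"
    unfolding filtered_chain_map_def filtered_map_def
    by (simp add: additive_lin2 incl.additive_axioms incl_filtered incl_D1)
  moreover have "\<exists>H. lin2 UNIV UNIV H \<and> filtered_map UNIV F F H \<and>
      (\<forall>v\<in>UNIV. incl (retr v) = v + D (H v) + H (D v))"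
    by (intro exI [of _ h])
      (simp add: additive_lin2 h.additive_axioms filtered_map_def h_filtered incl_retr)
  moreover have "filtered_homotopic UNIV D F (range proj) D1 F (\<lambda>v. retr (U v)) (\<lambda>v. U1 (retr v))"
    unfolding filtered_homotopic_def
    by (intro exI [of _ "\<lambda>_. 0"]) (simp add: lin2_def filtered_map_def retr_U zero_in_range)
  moreover have "filtered_homotopic (range proj) D1 F UNIV D F (\<lambda>v. incl (U1 v)) (\<lambda>v. U (incl v))"
    unfolding filtered_homotopic_def
    by (intro exI [of _ K])
      (simp add: additive_lin2 K.additive_axioms filtered_map_def K_filtered incl_U1_homotopy)
  ultimately show ?thesis
    by (simp add: ZU_deformation_retract_def retr_incl)
qed

end

lemma chain_add_self [simp]: "(c :: 'a \<Rightarrow>\<^sub>0 bit) + c = 0"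
  by (rule poly_mapping_eqI) (simp add: lookup_add)

lemma lin_ext_eq_sum:
  assumes "finite S" "Poly_Mapping.keys c \<subseteq> S"
  shows "lin_ext \<phi> c = (\<Sum>p\<in>S. if p \<in> Poly_Mapping.keys c then \<phi> p else 0)"
  unfolding lin_ext_def sum.inter_filter [OF assms(1), symmetric]
  using assms(2) by (intro arg_cong [where f = "sum \<phi>"]) blast

lemma additive_lin_ext: "additive (lin_ext (\<phi> :: 'g \<times> nat \<Rightarrow> 'a \<Rightarrow>\<^sub>0 bit))"
proof
  fix a b :: "'g chain"
  let ?S = "Poly_Mapping.keys a \<union> Poly_Mapping.keys b"
  let ?part = "\<lambda>c p. if p \<in> Poly_Mapping.keys c then \<phi> p else 0"
  have "?part (a + b) p = ?part a p + ?part b p" for p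
    by (cases "Poly_Mapping.lookup a p"; cases "Poly_Mapping.lookup b p")
      (simp_all add: in_keys_iff lookup_add)
  then show "lin_ext \<phi> (a + b) = lin_ext \<phi> a + lin_ext \<phi> b"
    using keys_add [of a b]
    by (simp add: lin_ext_eq_sum [of ?S] sum.distrib)
qed

lemma lin_ext_single [simp]: "lin_ext \<phi> (Poly_Mapping.single p 1) = \<phi> p"
  by (simp add: lin_ext_def)

lemma lin_ext_zero [simp]: "lin_ext \<phi> 0 = 0"
  by (simp add: lin_ext_def)

lemma chain_eq_sum_single: "c = (\<Sum>p\<in>Poly_Mapping.keys c. Poly_Mapping.single p (1 :: bit))"
proof (rule poly_mapping_eqI)
  fix q
  have "Poly_Mapping.lookup (\<Sum>p\<in>Poly_Mapping.keys c. Poly_Mapping.single p (1 :: bit)) q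
      = (\<Sum>p\<in>Poly_Mapping.keys c. if p = q then 1 else 0)"
    by (simp add: lookup_sum lookup_single when_def)
  then show "Poly_Mapping.lookup c q =
      Poly_Mapping.lookup (\<Sum>p\<in>Poly_Mapping.keys c. Poly_Mapping.single p 1) q"
    by (cases "Poly_Mapping.lookup c q") (simp_all add: in_keys_iff)
qed

lemma additive_chain_eqI:
  fixes F G :: "'g chain \<Rightarrow> 'v::ab_group_add"
  assumes "additive F" "additive G"
    and "\<And>w m. F (Poly_Mapping.single (w, m) 1) = G (Poly_Mapping.single (w, m) 1)"
  shows "F c = G c"
proof -
  have "F (Poly_Mapping.single p 1) = G (Poly_Mapping.single p 1)" for p
    using assms(3) [of "fst p" "snd p"] by simp
  then show ?thesis
    by (subst (1 2) chain_eq_sum_single)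
      (simp add: additive.sum [OF assms(1)] additive.sum [OF assms(2)])
qed

definition chain_restrict :: "('g \<times> nat \<Rightarrow> bool) \<Rightarrow> 'g chain \<Rightarrow> 'g chain" where
  "chain_restrict P = lin_ext (\<lambda>p. if P p then Poly_Mapping.single p 1 else 0)"

lemma additive_Upow: "additive (Upow m)"
  unfolding Upow_def by (rule additive_lin_ext)

lemma additive_bdry: "additive (bdry d)"
  unfolding bdry_def by (rule additive_lin_ext)

lemma additive_chain_restrict: "additive (chain_restrict P)"
  unfolding chain_restrict_def by (rule additive_lin_ext)

lemma additive_h1_map: "additive (h1_map x y r)"
  unfolding h1_map_def by (rule additive_lin_ext)

lemmas chain_map_add [simp] =
  additive.add [OF additive_Upow] additive.add [OF additive_bdry]
  additive.add [OF additive_chain_restrict] additive.add [OF additive_h1_map]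

lemmas chain_map_zero [simp] =
  additive.zero [OF additive_Upow] additive.zero [OF additive_bdry]
  additive.zero [OF additive_chain_restrict] additive.zero [OF additive_h1_map]

lemma Upow_single [simp]: "Upow m (Poly_Mapping.single (w, k) 1) = Poly_Mapping.single (w, k + m) 1"
  by (simp add: Upow_def basis_el_def)

lemma bdry_single [simp]: "bdry d (Poly_Mapping.single (w, m) 1) = Upow m (d w)"
  by (simp add: bdry_def)

lemma chain_restrict_single [simp]:
  "chain_restrict P (Poly_Mapping.single p 1) = (if P p then Poly_Mapping.single p 1 else 0)"
  by (simp add: chain_restrict_def)

lemma h1_map_single [simp]:
  "h1_map x y r (Poly_Mapping.single (w, m) 1) =
    (if w = x \<and> r \<le> m then Poly_Mapping.single (y, m - r) 1 else 0)"
  by (simp add: h1_map_def basis_el_def)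

lemma lookup_chain_restrict:
  "Poly_Mapping.lookup (chain_restrict P c) q = (if P q then Poly_Mapping.lookup c q else 0)"
proof -
  have "Poly_Mapping.lookup (chain_restrict P c) q
      = (\<Sum>p\<in>Poly_Mapping.keys c. if p = q \<and> P q then 1 else 0)"
    by (auto simp: chain_restrict_def lin_ext_def lookup_sum lookup_single when_def intro: sum.cong)
  then show ?thesis
    by (cases "Poly_Mapping.lookup c q") (simp_all add: in_keys_iff)
qed

lemma keys_chain_restrict:
  "Poly_Mapping.keys (chain_restrict P c) = {q \<in> Poly_Mapping.keys c. P q}"
  by (auto simp: in_keys_iff lookup_chain_restrict split: if_splits)

lemma chain_restrict_chain_restrict:
  "chain_restrict P (chain_restrict Q c) = chain_restrict (\<lambda>p. P p \<and> Q p) c"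
  by (rule poly_mapping_eqI) (simp add: lookup_chain_restrict)

lemma chain_restrict_eq_0:
  "(\<And>p. p \<in> Poly_Mapping.keys c \<Longrightarrow> \<not> P p) \<Longrightarrow> chain_restrict P c = 0"
  by (auto simp: keys_chain_restrict simp flip: keys_eq_empty)

lemma proj1_eq_chain_restrict: "proj1 x y r = chain_restrict (\<lambda>p. p \<notin> excl1 x y r)"
  unfolding proj1_def chain_restrict_def by (rule arg_cong [where f = lin_ext]) auto

lemma horiz_eq_chain_restrict: "horiz A d w = chain_restrict (\<lambda>p. gr_el A p = A w) (d w)"
  by (simp add: horiz_def chain_restrict_def lin_ext_def)

lemma Upow_Upow: "Upow a (Upow b c) = Upow (b + a) c"
  by (rule additive_chain_eqI [where F = "\<lambda>c. Upow a (Upow b c)"])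
    (simp_all add: additive_def add.assoc)

lemma bdry_Upow: "bdry d (Upow m c) = Upow m (bdry d c)"
  by (rule additive_chain_eqI [where F = "\<lambda>c. bdry d (Upow m c)"])
    (simp_all add: additive_def Upow_Upow)

lemma bdry_bdry:
  assumes "\<And>w. bdry d (d w) = 0"
  shows "bdry d (bdry d c) = 0"
  by (rule additive_chain_eqI [where F = "\<lambda>c. bdry d (bdry d c)" and G = "\<lambda>_. 0"])
    (simp_all add: additive_def bdry_Upow assms)

lemma chain_restrict_Upow:
  "chain_restrict P (Upow m c) = Upow m (chain_restrict (\<lambda>(w, k). P (w, k + m)) c)"
  by (rule additive_chain_eqI [where F = "\<lambda>c. chain_restrict P (Upow m c)"])
    (simp_all add: additive_def)

lemma alex_le_Some_iff: "alex A c \<le> Some B \<longleftrightarrow> (\<forall>p\<in>Poly_Mapping.keys c. gr_el A p \<le> B)"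
  by (auto simp: alex_def)

lemma alex_eq_None_iff: "alex A c = None \<longleftrightarrow> c = 0"
  by (simp add: alex_def)

lemma alex_zero [simp]: "alex A 0 = None"
  by (simp add: alex_def)

lemma single_one_neq_zero [simp]: "Poly_Mapping.single p (1 :: bit) \<noteq> 0"
  by (metis lookup_single_eq lookup_zero one_neq_zero)

lemma alex_single [simp]: "alex A (Poly_Mapping.single p (1 :: bit)) = Some (gr_el A p)"
  by (simp add: alex_def)

lemma alex_add: "alex A (a + b) \<le> max (alex A a) (alex A b)"
proof (cases "a = 0 \<or> b = 0")
  case False
  then obtain Ba Bb where Ba: "alex A a = Some Ba" and Bb: "alex A b = Some Bb"
    by (simp add: alex_def)
  have "\<forall>p\<in>Poly_Mapping.keys a. gr_el A p \<le> Ba" "\<forall>p\<in>Poly_Mapping.keys b. gr_el A p \<le> Bb"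
    using Ba Bb by (simp_all flip: alex_le_Some_iff)
  then have "alex A (a + b) \<le> Some (max Ba Bb)"
    using keys_add [of a b] by (force simp: alex_le_Some_iff le_max_iff_disj)
  also have "Some (max Ba Bb) = max (alex A a) (alex A b)"
    by (simp add: Ba Bb max_def)
  finally show ?thesis .
qed auto

lemma alex_sum_le:
  "finite K \<Longrightarrow> (\<And>p. p \<in> K \<Longrightarrow> alex A (\<phi> p) \<le> X) \<Longrightarrow>
    alex A (\<Sum>p\<in>K. \<phi> p) \<le> X"
  by (induction K rule: finite_induct) (auto intro: order_trans [OF alex_add])

lemma alex_lin_ext_le:
  assumes "\<And>p. alex A (\<phi> p) \<le> Some (gr_el A p)"
  shows "alex A (lin_ext \<phi> c) \<le> alex A c"
proof (cases "c = 0")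
  case False
  then obtain B where B: "alex A c = Some B"
    by (simp add: alex_def)
  then have "\<forall>p\<in>Poly_Mapping.keys c. gr_el A p \<le> B"
    by (simp flip: alex_le_Some_iff)
  then have "alex A (\<phi> p) \<le> Some B" if "p \<in> Poly_Mapping.keys c" for p
    using that by (intro order_trans [OF assms [of p]]) simp
  then show ?thesis
    by (simp add: B lin_ext_def alex_sum_le)
qed simp

lemma alex_Upow_le_Some:
  assumes "alex A c \<le> Some B"
  shows "alex A (Upow m c) \<le> Some (B - int m)"
  unfolding Upow_def lin_ext_def
proof (rule alex_sum_le)
  fix p assume "p \<in> Poly_Mapping.keys c"
  then show "alex A ((\<lambda>(w, k). basis_el w (k + m)) p) \<le> Some (B - int m)"
    using assms by (auto simp: alex_le_Some_iff basis_el_def gr_el_def case_prod_unfold)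
qed simp

lemma alex_Upow_le: "alex A (Upow m c) \<le> alex A c"
  unfolding Upow_def by (rule alex_lin_ext_le) (auto simp: basis_el_def gr_el_def)

lemma alex_chain_restrict_le: "alex A (chain_restrict P c) \<le> alex A c"
  unfolding chain_restrict_def by (rule alex_lin_ext_le) simp

lemma alex_bdry_le:
  assumes "\<And>w p. p \<in> Poly_Mapping.keys (d w) \<Longrightarrow> gr_el A p \<le> A w"
  shows "alex A (bdry d c) \<le> alex A c"
  unfolding bdry_def
proof (rule alex_lin_ext_le)
  fix p :: "'a \<times> nat"
  have "alex A (Upow (snd p) (d (fst p))) \<le> Some (A (fst p) - int (snd p))"
    using assms by (intro alex_Upow_le_Some) (simp add: alex_le_Some_iff)
  then show "alex A ((\<lambda>(w, m). Upow m (d w)) p) \<le> Some (gr_el A p)"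
    by (simp add: case_prod_unfold gr_el_def)
qed

lemma Z_filtration_bdry:
  "(\<And>w p. p \<in> Poly_Mapping.keys (d w) \<Longrightarrow> gr_el A p \<le> A w) \<Longrightarrow>
    Z_filtration UNIV (bdry d) (alex A)"
  by (simp add: Z_filtration_def alex_add alex_bdry_le alex_eq_None_iff)

lemma alex_h1_map_le:
  assumes "A y = A x - int r"
  shows "alex A (h1_map x y r c) \<le> alex A c"
  unfolding h1_map_def
  by (rule alex_lin_ext_le) (auto simp: assms basis_el_def gr_el_def of_nat_diff)

locale cancellable_pair =
  fixes A :: "'g \<Rightarrow> int" and d :: "'g \<Rightarrow> 'g chain"
    and x1 y1 :: 'g and r1 :: nat and R :: "'g chain"
  assumes bdry_d: "bdry d (d w) = 0"
    and d_filtered: "p \<in> Poly_Mapping.keys (d w) \<Longrightarrow> gr_el A p \<le> A w"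
    and x1_neq_y1: "x1 \<noteq> y1"
    and d_y1: "d y1 = basis_el x1 r1 + R"
    and R_avoids: "p \<in> Poly_Mapping.keys R \<Longrightarrow> fst p \<noteq> x1 \<and> fst p \<noteq> y1"
    and A_y1: "A y1 = A x1 - int r1"
begin

abbreviation \<rho>X :: "'g chain \<Rightarrow> 'g chain" where
  "\<rho>X \<equiv> chain_restrict (\<lambda>p. fst p = x1 \<and> r1 \<le> snd p)"

abbreviation \<rho>Y :: "'g chain \<Rightarrow> 'g chain" where
  "\<rho>Y \<equiv> chain_restrict (\<lambda>p. fst p = y1)"

abbreviation h :: "'g chain \<Rightarrow> 'g chain" where
  "h \<equiv> h1_map x1 y1 r1"

lemma \<rho>X_Upow_R [simp]: "\<rho>X (Upow n R) = 0"
  by (simp add: chain_restrict_Upow case_prod_unfold chain_restrict_eq_0 R_avoids)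

lemma \<rho>Y_Upow_R [simp]: "\<rho>Y (Upow n R) = 0"
  by (simp add: chain_restrict_Upow case_prod_unfold chain_restrict_eq_0 R_avoids)

lemma h_eq: "h c = \<rho>Y (h (\<rho>X c))"
  by (rule additive_chain_eqI [where F = h])
    (simp_all add: additive_h1_map additive_def)

lemma h_Upow_R [simp]: "h (Upow n R) = 0"
  by (subst h_eq) simp

lemma h_bdry_\<rho>Y: "h (bdry d (\<rho>Y c)) = \<rho>Y c"
  by (rule additive_chain_eqI [where F = "\<lambda>c. h (bdry d (\<rho>Y c))"])
    (simp_all add: additive_h1_map additive_bdry additive_def d_y1 basis_el_def)

lemma \<rho>X_bdry_h: "\<rho>X (bdry d (h c)) = \<rho>X c"
  by (rule additive_chain_eqI [where F = "\<lambda>c. \<rho>X (bdry d (h c))"])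
    (simp_all add: additive_h1_map additive_bdry additive_def d_y1 basis_el_def)

lemma \<rho>Y_bdry_h: "\<rho>Y (bdry d (h c)) = 0"
  by (rule additive_chain_eqI [where F = "\<lambda>c. \<rho>Y (bdry d (h c))" and G = "\<lambda>_. 0"])
    (simp_all add: additive_h1_map additive_bdry additive_def d_y1 basis_el_def x1_neq_y1)

lemma \<rho>Y_Upow_\<rho>Y: "\<rho>Y (Upow 1 (\<rho>Y c)) = Upow 1 (\<rho>Y c)"
  by (rule additive_chain_eqI [where F = "\<lambda>c. \<rho>Y (Upow 1 (\<rho>Y c))"])
    (simp_all add: additive_Upow additive_def)

lemma \<rho>X_\<rho>Y: "\<rho>X (\<rho>Y c) = 0" and \<rho>Y_\<rho>X: "\<rho>Y (\<rho>X c) = 0"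
  using x1_neq_y1 by (simp_all add: chain_restrict_chain_restrict chain_restrict_eq_0)

lemma \<rho>X_idem: "\<rho>X (\<rho>X c) = \<rho>X c" and \<rho>Y_idem: "\<rho>Y (\<rho>Y c) = \<rho>Y c"
  by (simp_all add: chain_restrict_chain_restrict)

lemma Z_filtration_bdry_d: "Z_filtration UNIV (bdry d) (alex A)"
  by (rule Z_filtration_bdry) (rule d_filtered)

sublocale filtered_gaussian_elimination "bdry d" h \<rho>X \<rho>Y "Upow 1" "alex A"
  by unfold_locales
    (fact chain_map_add chain_add_self
      bdry_bdry [OF bdry_d] bdry_Upow [symmetric] \<rho>X_idem \<rho>Y_idem \<rho>X_\<rho>Y \<rho>Y_\<rho>X h_eq
      h_bdry_\<rho>Y \<rho>X_bdry_h \<rho>Y_bdry_h \<rho>Y_Upow_\<rho>Y Z_filtration_bdry_d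
      alex_h1_map_le [where x = x1 and y = y1, OF A_y1] alex_chain_restrict_le alex_Upow_le)+

lemma proj_eq_chain_restrict: "proj c = chain_restrict (\<lambda>p. p \<notin> excl1 x1 y1 r1) c"
  using x1_neq_y1
  by (intro poly_mapping_eqI) (auto simp: proj_def lookup_add lookup_chain_restrict excl1_def)

lemma C1_set_eq_range_proj: "C1_set x1 y1 r1 = range proj"
proof
  show "C1_set x1 y1 r1 \<subseteq> range proj"
  proof
    fix c assume "c \<in> C1_set x1 y1 r1"
    then have "Poly_Mapping.lookup c q = 0" if "q \<in> excl1 x1 y1 r1" for q
      using that by (auto simp: C1_set_def simp flip: not_in_keys_iff_lookup_eq_zero)
    then have "proj c = c"
      by (intro poly_mapping_eqI) (simp add: proj_eq_chain_restrict lookup_chain_restrict)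
    then show "c \<in> range proj"
      using rangeI [of proj c] by simp
  qed
  show "range proj \<subseteq> C1_set x1 y1 r1"
    by (auto simp: C1_set_def proj_eq_chain_restrict keys_chain_restrict)
qed

end

lemma horiz_simplified_cancellable_pair:
  assumes cplx: "knot_like_complex A M d" and hs: "horiz_simplified A d N x y z r"
    and i: "i \<in> {1..N}"
  shows "cancellable_pair A d (x i) (y i) (r i) (d (y i) + basis_el (x i) (r i))"
proof -
  have x_neq_y: "x i \<noteq> y i" and horiz_y: "horiz A d (y i) = basis_el (x i) (r i)"
    using hs i unfolding horiz_simplified_def by blast+
  have maslov: "maslov_el M p = M w - 1" if "p \<in> Poly_Mapping.keys (d w)" for p w
    using cplx that by (simp add: knot_like_complex_def)
  have "Poly_Mapping.lookup (horiz A d (y i)) (x i, r i) = 1"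
    by (simp add: horiz_y basis_el_def)
  then have key: "(x i, r i) \<in> Poly_Mapping.keys (d (y i))"
    and A_y: "A (y i) = A (x i) - int (r i)"
    by (auto simp: horiz_eq_chain_restrict lookup_chain_restrict in_keys_iff gr_el_def
        split: if_splits)
  txt \<open>The Maslov grading rules out further terms of \<open>d (y i)\<close> involving \<open>x i\<close> or \<open>y i\<close>.\<close>
  have key_x: "p = (x i, r i)" if "p \<in> Poly_Mapping.keys (d (y i))" "fst p = x i" for p
    using maslov [OF that(1)] maslov [OF key] that(2) by (cases p) (simp add: maslov_el_def)
  have no_key_y: "fst p \<noteq> y i" if "p \<in> Poly_Mapping.keys (d (y i))" for p
    using maslov [OF that] by (auto simp: maslov_el_def) presburger
  show ?thesis
  proof
    show "bdry d (d w) = 0" for w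
      using cplx by (simp add: knot_like_complex_def)
    show "gr_el A p \<le> A w" if "p \<in> Poly_Mapping.keys (d w)" for p w
      using cplx that by (simp add: knot_like_complex_def)
    show "d (y i) = basis_el (x i) (r i) + (d (y i) + basis_el (x i) (r i))"
      by (subst add.left_commute) simp
  next
    fix p assume p: "p \<in> Poly_Mapping.keys (d (y i) + basis_el (x i) (r i))"
    have "Poly_Mapping.lookup (d (y i) + basis_el (x i) (r i)) p
        = Poly_Mapping.lookup (d (y i)) p + (if (x i, r i) = p then 1 else 0)"
      by (simp add: lookup_add basis_el_def lookup_single when_def)
    moreover have "p \<noteq> (x i, r i)"
    proof
      assume "p = (x i, r i)"
      with p key show False
        by (simp add: lookup_add basis_el_def in_keys_iff)
    qed
    ultimately have "p \<in> Poly_Mapping.keys (d (y i))"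
      using p by (simp add: in_keys_iff)
    then show "fst p \<noteq> x i \<and> fst p \<noteq> y i"
      using key_x no_key_y \<open>p \<noteq> (x i, r i)\<close> by blast
  qed (fact x_neq_y A_y)+
qed

theorem lemma3p1:
  fixes A M :: "'g::finite \<Rightarrow> int" and d :: "'g \<Rightarrow> 'g chain"
    and N :: nat and x y :: "nat \<Rightarrow> 'g" and z :: 'g and r :: "nat \<Rightarrow> nat"
    and h1 \<pi> \<iota> D0 U D1 U1 f1 g1 :: "'g chain \<Rightarrow> 'g chain"
    and C1 :: "'g chain set" and A1 :: "'g chain \<Rightarrow> int option"
  assumes cplx: "knot_like_complex A M d"
    and hs: "horiz_simplified A d N x y z r"
    and N1: "1 \<le> N"
    and h1_def: "h1 = h1_map (x 1) (y 1) (r 1)"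
    and C1_def: "C1 = C1_set (x 1) (y 1) (r 1)"
    and \<pi>_def: "\<pi> = proj1 (x 1) (y 1) (r 1)"
    and \<iota>_def: "\<iota> = (\<lambda>c. c)"
    and D0_def: "D0 = bdry d"
    and U_def: "U = Upow 1"
    and D1_def: "D1 = (\<lambda>c. \<pi> (D0 (\<iota> c) + D0 (h1 (D0 (\<iota> c)))))"
    and U1_def: "U1 = (\<lambda>c. \<pi> (U (\<iota> c) + D0 (h1 (U (\<iota> c)))))"
    and A1_def: "A1 = (\<lambda>c. alex A (\<iota> c))"
    and f1_def: "f1 = (\<lambda>c. \<pi> (c + D0 (h1 c)))"
    and g1_def: "g1 = (\<lambda>c. \<iota> c + h1 (D0 (\<iota> c)))"
  shows "ZU_deformation_retract UNIV D0 (alex A) U C1 D1 A1 U1 f1 g1"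
proof -
  have "1 \<in> {1..N}"
    using N1 by simp
  then interpret P: cancellable_pair A d "x 1" "y 1" "r 1" "d (y 1) + basis_el (x 1) (r 1)"
    by (rule horiz_simplified_cancellable_pair [OF cplx hs])
  have \<pi>_eq: "\<pi> = P.proj"
    by (simp add: fun_eq_iff \<pi>_def proj1_eq_chain_restrict P.proj_eq_chain_restrict
        del: One_nat_def)
  have "D1 = P.D1" "U1 = P.U1" "f1 = P.retr" "g1 = P.incl"
    by (simp_all add: fun_eq_iff D1_def U1_def f1_def g1_def \<pi>_eq \<iota>_def D0_def U_def h1_def
        P.D1_def P.U1_def P.retr_def P.incl_def del: One_nat_def)
  moreover have "C1 = range P.proj" "A1 = alex A"
    by (simp_all add: C1_def P.C1_set_eq_range_proj A1_def \<iota>_def del: One_nat_def)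
  ultimately show ?thesis
    using P.deformation_retract by (simp add: D0_def U_def)
qed

end
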